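(* For every $\varepsilon>0$ there exists $d_0$ such that for every integer $d\ge d_0$ and every triangle-free graph $G$ on $n$ vertices with maximum degree $d$, \[ |\mathcal I(G)| \;\ge\; \exp\!\left[\left(\tfrac12-\varepsilon\right)\frac{\log^2 d}{d}\,n\right]. \]
   Context: $\mathcal I(G)$ denotes the set of all independent sets of $G$ (including the empty set). Logarithms are natural. *)

theory Defs
  imports "HOL-Analysis.Analysis"
begin

definition simple_graph :: "'a set \<Rightarrow> ('a \<Rightarrow> 'a \<Rightarrow> bool) \<Rightarrow> bool" where
  "simple_graph V E \<longleftrightarrow> finite V \<and> (\<forall>u v. E u v \<longrightarrow> E v u)
     \<and> (\<forall>v. \<not> E v v) \<and> (\<forall>u v. E u v \<longrightarrow> u \<in> V \<and> v \<in> V)"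

definition neighbours :: "'a set \<Rightarrow> ('a \<Rightarrow> 'a \<Rightarrow> bool) \<Rightarrow> 'a \<Rightarrow> 'a set" where
  "neighbours V E v = {u \<in> V. E v u}"

definition degree :: "'a set \<Rightarrow> ('a \<Rightarrow> 'a \<Rightarrow> bool) \<Rightarrow> 'a \<Rightarrow> nat" where
  "degree V E v = card (neighbours V E v)"

text \<open>Maximum degree (defined for a nonempty vertex set).\<close>
definition max_degree :: "'a set \<Rightarrow> ('a \<Rightarrow> 'a \<Rightarrow> bool) \<Rightarrow> nat" where
  "max_degree V E = Max (degree V E ` V)"

definition triangle_free :: "'a set \<Rightarrow> ('a \<Rightarrow> 'a \<Rightarrow> bool) \<Rightarrow> bool" where
  "triangle_free V E \<longleftrightarrow> \<not> (\<exists>x\<in>V. \<exists>y\<in>V. \<exists>z\<in>V. E x y \<and> E y z \<and> E x z)"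

definition independent_set :: "'a set \<Rightarrow> ('a \<Rightarrow> 'a \<Rightarrow> bool) \<Rightarrow> 'a set \<Rightarrow> bool" where
  "independent_set V E S \<longleftrightarrow> S \<subseteq> V \<and> (\<forall>x\<in>S. \<forall>y\<in>S. \<not> E x y)"

definition independent_sets :: "'a set \<Rightarrow> ('a \<Rightarrow> 'a \<Rightarrow> bool) \<Rightarrow> 'a set set" where
  "independent_sets V E = {S. independent_set V E S}"

end

theory Submission
  imports Defs "HOL-Real_Asymp.Real_Asymp"
begin

text \<open>
  Let \<open>Z(l)\<close> be the independence polynomial of \<open>G\<close> and \<open>S(l) = l Z'(l)\<close>, so that \<open>S(l) / (n Z(l))\<close>
  is the expected density of the hard-core model at fugacity \<open>l\<close>. Fix a vertex \<open>v\<close> and the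
  configuration outside its closed neighbourhood. Since \<open>G\<close> is triangle-free, the configuration
  inside is \<open>{v}\<close> or an arbitrary subset of the \<open>y\<close> neighbours of \<open>v\<close> that have no occupied
  neighbour, so a suitable convex combination of \<open>Pr[v \<in> I]\<close> and \<open>E |I \<inter> N(v)| / d\<close> is at least some
  \<open>c\<close> uniformly in \<open>y\<close>. Averaging over \<open>v\<close> gives \<open>S(l) \<ge> c n Z(l)\<close>, and convexity of \<open>exp\<close> turns
  this into \<open>Z(e l) \<ge> exp (c n) Z(l)\<close>. Along the fugacities \<open>l_k = M exp k / d\<close> with
  \<open>M = ln d / \<epsilon>\<close> the admissible \<open>c_k\<close> grow linearly in \<open>k\<close>; stopping at \<open>K \<approx> ln d\<close>, where
  \<open>l_K \<le> \<epsilon>\<close> and hence \<open>Z(l_K)\<close> is at most the number of independent sets, the sum of the \<open>c_k\<close>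
  is \<open>(1/2 - o(1)) ln\<^sup>2 d / d\<close>.
\<close>

lemma sum_Pow_power_card:
  fixes l :: "'a::comm_semiring_1"
  assumes "finite U"
  shows "(\<Sum>T\<in>Pow U. l ^ card T) = (1 + l) ^ card U"
  using prod_add[OF assms, of "\<lambda>_. l" "\<lambda>_. 1"] by (simp add: add.commute)

lemma sum_Pow_insert:
  assumes "finite A" "a \<notin> A"
  shows "(\<Sum>T\<in>Pow (insert a A). f T) = (\<Sum>T\<in>Pow A. f T + f (insert a T))"
proof -
  have "inj_on (insert a) (Pow A)"
    using assms(2) by (intro inj_onI) (metis PowD insert_ident subsetD)
  moreover have "Pow A \<inter> insert a ` Pow A = {}"
    using assms(2) by auto
  ultimately show ?thesis
    unfolding Pow_insert using assms(1)
    by (simp add: sum.union_disjoint sum.reindex sum.distrib)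
qed

lemma sum_Pow_card_power_card:
  fixes l :: "'a::comm_semiring_1" and U :: "'b set"
  assumes "finite U"
  shows "(1 + l) * (\<Sum>T\<in>Pow U. of_nat (card T) * l ^ card T)
           = of_nat (card U) * l * (1 + l) ^ card U"
  using assms
proof (induction U rule: finite_induct)
  case (insert a A)
  define S where "S B = (\<Sum>T\<in>Pow B. of_nat (card T) * l ^ card T)" for B :: "'b set"
  have "card (insert a T) = Suc (card T)" if "T \<in> Pow A" for T
  proof -
    from that insert.hyps have "finite T" "a \<notin> T"
      by (auto dest: finite_subset)
    then show ?thesis by simp
  qed
  then have "S (insert a A)
        = (\<Sum>T\<in>Pow A. (1 + l) * (of_nat (card T) * l ^ card T) + l * l ^ card T)"
    unfolding S_def using insert.hyps by (simp add: sum_Pow_insert algebra_simps)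
  also have "\<dots> = (1 + l) * S A + l * (1 + l) ^ card A"
    unfolding S_def using insert.hyps
    by (simp only: sum.distrib sum_distrib_left[symmetric] sum_Pow_power_card)
  finally show ?case
    using insert unfolding S_def by (simp add: algebra_simps)
qed simp

text \<open>If \<open>y\<close> neighbours of a vertex have no neighbour in the configuration outside its closed
  neighbourhood, the hard-core model at fugacity \<open>l\<close> occupies the vertex with probability
  \<open>l / (l + (1+l)^y)\<close> and has on average \<open>y l (1+l)^(y-1) / (l + (1+l)^y)\<close> occupied
  neighbours. The condition says that \<open>th\<close> times the former plus \<open>(1-th)/d\<close> times the latter
  is at least \<open>c\<close>, whatever \<open>y\<close>.\<close>
definition occupancy_condition :: "real \<Rightarrow> real \<Rightarrow> real \<Rightarrow> real \<Rightarrow> bool" where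
  "occupancy_condition d th l c \<longleftrightarrow>
     (\<forall>y::nat. c * (l + (1 + l) ^ y) * (1 + l) \<le> th * l * (1 + l) + (1 - th) * y * l * (1 + l) ^ y / d)"

lemma occupancy_conditionI:
  fixes l th c M d :: real
  assumes l: "l > 0" and th: "0 \<le> th" "th \<le> 1" and c: "c \<ge> 0" and M: "M > 0" and d: "d > 0"
    and c_vertex: "c \<le> th * M / (M + d)"
    and c_nbhd: "c * (1 + l) * (d + M) \<le> (1 - th) * ln (l * d / M)"
  shows "occupancy_condition d th l c"
  unfolding occupancy_condition_def
proof
  fix y :: nat
  define X where "X = (1 + l) ^ y"
  define T where "T = l * d / M"
  have X: "X > 0" unfolding X_def using l by simp
  have T: "T > 0" unfolding T_def using l d M by simp
  have nbhd_nonneg: "(1 - th) * y * l * X / d \<ge> 0" using th l X d by simp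
  \<comment> \<open>With few uncovered neighbours the vertex term pays for \<open>c\<close>, with many the neighbour term.\<close>
  have "c * (l + X) * (1 + l) \<le> th * l * (1 + l) + (1 - th) * y * l * X / d"
  proof (cases "X \<le> T")
    case True
    have "c * (l + X) * (1 + l) \<le> c * (l + T) * (1 + l)"
      using True c l by (intro mult_right_mono mult_left_mono) auto
    also have "\<dots> = (c * (M + d) / M) * (l * (1 + l))"
      unfolding T_def using M by (simp add: field_simps)
    also have "\<dots> \<le> th * (l * (1 + l))"
      using c_vertex M d l by (intro mult_right_mono) (simp_all add: field_simps)
    finally show ?thesis using nbhd_nonneg by (simp add: mult.assoc)
  next
    case False
    have "ln X \<le> y * l"
      unfolding X_def using l ln_add_one_self_le_self[of l]
      by (simp add: ln_realpow mult_left_mono)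
    moreover have "ln T < ln X" using False T by simp
    ultimately have lnT: "ln T \<le> y * l" by simp
    have "(l + X) / (d + M) \<le> X / d"
      using False M d unfolding T_def by (simp add: field_simps)
    have "c * (l + X) * (1 + l) = (c * (1 + l) * (d + M)) * ((l + X) / (d + M))"
      using d M by (simp add: field_simps)
    also have "\<dots> \<le> ((1 - th) * ln T) * ((l + X) / (d + M))"
      using c_nbhd l X d M unfolding T_def by (intro mult_right_mono) auto
    also have "\<dots> \<le> ((1 - th) * (y * l)) * (X / d)"
      using lnT th l X d M \<open>(l + X) / (d + M) \<le> X / d\<close>
      by (intro mult_mono mult_left_mono) auto
    finally have "c * (l + X) * (1 + l) \<le> (1 - th) * y * l * X / d"
      by simp
    moreover have "0 \<le> th * l * (1 + l)" using th l by simp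
    ultimately show ?thesis by linarith
  qed
  then show "c * (l + (1 + l) ^ y) * (1 + l) \<le> th * l * (1 + l) + (1 - th) * y * l * (1 + l) ^ y / d"
    by (simp add: X_def)
qed

lemma occupancy_condition_sum_Pow:
  assumes U: "finite U" and l: "l > 0" and cond: "occupancy_condition d th l c"
  shows "0 \<le> l * (th - c) + (\<Sum>T\<in>Pow U. l ^ card T * ((1 - th) / d * card T - c))"
proof -
  define w where "w = (1 - th) / d"
  define P0 where "P0 = (\<Sum>T\<in>Pow U. l ^ card T)"
  define P1 where "P1 = (\<Sum>T\<in>Pow U. real (card T) * l ^ card T)"
  have P0: "P0 = (1 + l) ^ card U" and P1: "(1 + l) * P1 = card U * l * (1 + l) ^ card U"
    unfolding P0_def P1_def using sum_Pow_power_card sum_Pow_card_power_card U by blast+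
  have sum_eq: "(\<Sum>T\<in>Pow U. l ^ card T * (w * card T - c)) = w * P1 - c * P0"
    unfolding P0_def P1_def sum_distrib_left sum_subtractf[symmetric]
    by (rule sum.cong) (simp_all add: algebra_simps)
  have "(1 + l) * (l * (th - c) + (w * P1 - c * P0))
        = th * l * (1 + l) + w * ((1 + l) * P1) - c * (l + P0) * (1 + l)"
    by (simp add: algebra_simps)
  also have "\<dots> \<ge> 0"
    using cond unfolding occupancy_condition_def P0 P1 w_def
    by (simp add: diff_ge_0_iff_ge mult.assoc)
  finally have "0 \<le> l * (th - c) + (w * P1 - c * P0)"
    using l by (simp add: zero_le_mult_iff add_pos_pos)
  then show ?thesis
    using sum_eq unfolding w_def by simp
qed

lemma log_cutoff:
  fixes e x :: real
  defines "L \<equiv> ln x + 2 * ln e - ln (ln x)"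
  assumes e: "0 < e" "e < 1" and x: "exp 1 \<le> x"
  shows "L \<le> ln x" and "ln x / e * exp L / x = e"
proof -
  have "x > 1" "ln x \<ge> 1"
    using x exp_gt_one[of 1] ln_ge_iff[of x 1] by linarith+
  then have "x > 0"
    by simp
  have "ln e < 0" "ln (ln x) \<ge> 0"
    using e \<open>ln x \<ge> 1\<close> by simp_all
  then show "L \<le> ln x"
    unfolding L_def by linarith
  have "L = ln (x * e\<^sup>2 / ln x)"
    unfolding L_def using \<open>x > 1\<close> e by (simp add: ln_div ln_mult ln_realpow)
  moreover have "x * e\<^sup>2 / ln x > 0"
    using \<open>x > 1\<close> e by (intro divide_pos_pos mult_pos_pos) auto
  ultimately have "exp L = x * e\<^sup>2 / ln x"
    by simp
  moreover have "ln x \<noteq> 0"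
    using \<open>ln x \<ge> 1\<close> by simp
  ultimately show "ln x / e * exp L / x = e"
    using \<open>x > 0\<close> e by (simp add: field_simps power2_eq_square)
qed

locale sgraph =
  fixes V :: "'a set" and E :: "'a \<Rightarrow> 'a \<Rightarrow> bool"
  assumes simple: "simple_graph V E"
begin

lemma finite_V: "finite V"
  and edge_sym: "E u v \<Longrightarrow> E v u"
  and edge_irrefl: "\<not> E v v"
  and edge_in_V: "E u v \<Longrightarrow> u \<in> V \<and> v \<in> V"
  using simple unfolding simple_graph_def by blast+

lemma finite_neighbours: "finite (neighbours V E v)"
  using finite_V unfolding neighbours_def by simp

lemma independent_sets_subset_vertices: "I \<in> independent_sets V E \<Longrightarrow> I \<subseteq> V"
  unfolding independent_sets_def independent_set_def by simp

lemma independent_sets_downward_closed: "I \<in> independent_sets V E \<Longrightarrow> J \<subseteq> I \<Longrightarrow> J \<in> independent_sets V E"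
  unfolding independent_sets_def independent_set_def by blast

lemma finite_independent_sets: "finite (independent_sets V E)"
  using finite_V independent_sets_subset_vertices by (blast intro: finite_subset[of _ "Pow V"])

lemma empty_in_independent_sets: "{} \<in> independent_sets V E"
  unfolding independent_sets_def independent_set_def by simp

lemma sum_card_Int_neighbours:
  assumes "I \<subseteq> V"
  shows "(\<Sum>v\<in>V. card (I \<inter> neighbours V E v)) = (\<Sum>u\<in>I. degree V E u)"
proof -
  have I: "finite I" using assms finite_V by (rule finite_subset)
  have "(\<Sum>v\<in>V. card (I \<inter> neighbours V E v)) = (\<Sum>v\<in>V. \<Sum>u\<in>I. of_bool (E v u))"
  proof (rule sum.cong)
    fix v
    have "I \<inter> neighbours V E v = I \<inter> {u. E v u}"
      using assms unfolding neighbours_def by blast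
    then show "card (I \<inter> neighbours V E v) = (\<Sum>u\<in>I. of_bool (E v u))"
      using I by simp
  qed simp
  also have "\<dots> = (\<Sum>u\<in>I. \<Sum>v\<in>V. of_bool (E v u))"
    by (rule sum.swap)
  also have "\<dots> = (\<Sum>u\<in>I. degree V E u)"
  proof (rule sum.cong)
    fix u
    have "V \<inter> {v. E v u} = neighbours V E u"
      unfolding neighbours_def using edge_sym by blast
    then show "(\<Sum>v\<in>V. of_bool (E v u)) = degree V E u"
      using finite_V unfolding degree_def by simp
  qed simp
  finally show ?thesis .
qed

definition indep_poly :: "real \<Rightarrow> real" where
  "indep_poly l = (\<Sum>I\<in>independent_sets V E. l ^ card I)"

text \<open>\<open>indep_poly_moment l = l * deriv indep_poly l\<close>; divided by \<open>card V * indep_poly l\<close> it is the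
  occupancy fraction of the hard-core model.\<close>
definition indep_poly_moment :: "real \<Rightarrow> real" where
  "indep_poly_moment l = (\<Sum>I\<in>independent_sets V E. real (card I) * l ^ card I)"

lemma indep_poly_ge_1: "l \<ge> 0 \<Longrightarrow> indep_poly l \<ge> 1"
  unfolding indep_poly_def
  using member_le_sum[OF empty_in_independent_sets, of "\<lambda>I. l ^ card I"] finite_independent_sets
  by simp

lemma indep_poly_le_card:
  assumes "0 \<le> l" "l \<le> 1"
  shows "indep_poly l \<le> card (independent_sets V E)"
proof -
  have "indep_poly l \<le> (\<Sum>I\<in>independent_sets V E. 1)"
    unfolding indep_poly_def using assms by (intro sum_mono) (auto intro: power_le_one)
  then show ?thesis by simp
qed

lemma degree_le_max_degree: "v \<in> V \<Longrightarrow> degree V E v \<le> max_degree V E"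
  unfolding max_degree_def using finite_V by simp

lemma card_independent_sets_pos: "card (independent_sets V E) > 0"
  using finite_independent_sets empty_in_independent_sets card_gt_0_iff by blast

lemma exp_nonpos_le_card_independent_sets:
  "x \<le> 0 \<Longrightarrow> exp x \<le> card (independent_sets V E)"
proof -
  assume "x \<le> 0"
  then have "exp x \<le> 1"
    by simp
  also have "1 \<le> real (card (independent_sets V E))"
    using card_independent_sets_pos by linarith
  finally show ?thesis .
qed

text \<open>With \<open>m = indep_poly_moment l / indep_poly l\<close>, the estimate \<open>exp (k - m) \<ge> 1 + k - m\<close>
  summed against the weights \<open>l ^ k\<close> gives \<open>indep_poly (exp 1 * l) \<ge> exp m * indep_poly l\<close>.\<close>
lemma indep_poly_exp_growth:
  assumes l: "l > 0" and occ: "c * n * indep_poly l \<le> indep_poly_moment l"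
  shows "indep_poly l * exp (c * n) \<le> indep_poly (exp 1 * l)"
proof -
  let ?I = "independent_sets V E"
  have Z: "indep_poly l \<ge> 1"
    using l by (simp add: indep_poly_ge_1)
  define m where "m = indep_poly_moment l / indep_poly l"
  have "(\<Sum>I\<in>?I. l ^ card I * (1 + (card I - m))) = indep_poly l + indep_poly_moment l - m * indep_poly l"
    unfolding indep_poly_def indep_poly_moment_def
    by (simp add: algebra_simps sum.distrib sum_subtractf sum_distrib_left)
  also have "\<dots> = indep_poly l"
    unfolding m_def using Z by simp
  finally have "exp m * indep_poly l = exp m * (\<Sum>I\<in>?I. l ^ card I * (1 + (card I - m)))"
    by simp
  also have "\<dots> = (\<Sum>I\<in>?I. l ^ card I * (exp m * (1 + (card I - m))))"
    by (simp add: sum_distrib_left mult_ac)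
  also have "\<dots> \<le> (\<Sum>I\<in>?I. l ^ card I * exp (card I))"
  proof (intro sum_mono mult_left_mono)
    fix I
    have "exp m * (1 + (card I - m)) \<le> exp m * exp (card I - m)"
      by simp
    then show "exp m * (1 + (card I - m)) \<le> exp (card I)"
      by (simp add: exp_diff)
  qed (use l in simp)
  also have "\<dots> = indep_poly (exp 1 * l)"
    unfolding indep_poly_def by (simp add: power_mult_distrib exp_of_nat_mult[symmetric] mult.commute)
  finally have "exp m * indep_poly l \<le> indep_poly (exp 1 * l)" .
  moreover have "c * n \<le> m"
    unfolding m_def using occ Z by (simp add: le_divide_eq)
  then have "indep_poly l * exp (c * n) \<le> exp m * indep_poly l"
    using Z by simp
  ultimately show ?thesis by linarith
qed

lemma indep_poly_iterate:
  fixes lam c :: "nat \<Rightarrow> real"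
  assumes pos: "\<And>k. lam k > 0" and succ: "\<And>k. lam (Suc k) = exp 1 * lam k"
    and occ: "\<And>k. k < K \<Longrightarrow> c k * card V * indep_poly (lam k) \<le> indep_poly_moment (lam k)"
  shows "exp (card V * (\<Sum>k<K. c k)) \<le> indep_poly (lam K)"
  using occ
proof (induction K)
  case 0
  show ?case
    using indep_poly_ge_1[OF less_imp_le[OF pos]] by simp
next
  case (Suc K)
  have "exp (card V * (\<Sum>k<Suc K. c k)) = exp (card V * (\<Sum>k<K. c k)) * exp (c K * card V)"
    by (simp add: algebra_simps flip: exp_add)
  also have "\<dots> \<le> indep_poly (lam K) * exp (c K * card V)"
    using Suc by simp
  also have "\<dots> \<le> indep_poly (lam (Suc K))"
    unfolding succ using indep_poly_exp_growth[OF pos Suc.prems[of K]] by (simp add: mult.commute)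
  finally show ?case .
qed

end

locale triangle_free_graph = sgraph +
  assumes triangle_free: "triangle_free V E"
begin

lemma neighbours_not_adjacent:
  assumes "u \<in> neighbours V E v" "w \<in> neighbours V E v"
  shows "\<not> E u w"
  using assms triangle_free edge_in_V edge_sym unfolding triangle_free_def neighbours_def by blast

lemma independent_extensions_closed_neighbourhood:
  assumes v: "v \<in> V" and J: "J \<in> independent_sets V E" "J \<inter> insert v (neighbours V E v) = {}"
  shows "{T. T \<subseteq> insert v (neighbours V E v) \<and> J \<union> T \<in> independent_sets V E}
           = insert {v} (Pow {u \<in> neighbours V E v. \<forall>w\<in>J. \<not> E u w})"
proof -
  let ?N = "neighbours V E v"
  have J_indep: "J \<subseteq> V" "\<And>x y. x \<in> J \<Longrightarrow> y \<in> J \<Longrightarrow> \<not> E x y"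
    using J(1) unfolding independent_sets_def independent_set_def by auto
  show ?thesis
  proof (intro equalityI subsetI)
    fix T
    assume "T \<in> {T. T \<subseteq> insert v ?N \<and> J \<union> T \<in> independent_sets V E}"
    then have T: "T \<subseteq> insert v ?N" and T_indep: "\<And>x y. x \<in> J \<union> T \<Longrightarrow> y \<in> J \<union> T \<Longrightarrow> \<not> E x y"
      unfolding independent_sets_def independent_set_def by auto
    show "T \<in> insert {v} (Pow {u \<in> ?N. \<forall>w\<in>J. \<not> E u w})"
    proof (cases "v \<in> T")
      case True
      then have "T = {v}"
        using T T_indep unfolding neighbours_def by blast
      then show ?thesis by simp
    next
      case False
      then show ?thesis using T T_indep by auto
    qed
  next
    fix T
    assume "T \<in> insert {v} (Pow {u \<in> ?N. \<forall>w\<in>J. \<not> E u w})"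
    then consider "T = {v}" | "T \<subseteq> ?N" "\<And>u w. u \<in> T \<Longrightarrow> w \<in> J \<Longrightarrow> \<not> E u w"
      by auto
    then have "independent_set V E (J \<union> T)"
    proof cases
      case 1
      have "\<not> E v w" if "w \<in> J" for w
        using that J(2) edge_in_V unfolding neighbours_def by blast
      then show ?thesis
        unfolding independent_set_def 1 using J_indep v edge_irrefl edge_sym by blast
    next
      case 2
      have "J \<union> T \<subseteq> V"
        using 2 J_indep unfolding neighbours_def by auto
      moreover have "\<not> E x y" if "x \<in> J \<union> T" "y \<in> J \<union> T" for x y
        using that
      proof (elim UnE)
        assume "x \<in> T" "y \<in> T"
        then show ?thesis using 2 neighbours_not_adjacent by blast
      qed (use 2 J_indep edge_sym in blast)+
      ultimately show ?thesis
        unfolding independent_set_def by blast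
    qed
    moreover have "T \<subseteq> insert v ?N"
      using \<open>T \<in> insert {v} _\<close> by auto
    ultimately show "T \<in> {T. T \<subseteq> insert v ?N \<and> J \<union> T \<in> independent_sets V E}"
      unfolding independent_sets_def by simp
  qed
qed

lemma sum_independent_sets_closed_neighbourhood:
  assumes v: "v \<in> V"
  shows "(\<Sum>I\<in>independent_sets V E. f I)
           = (\<Sum>J\<in>{J \<in> independent_sets V E. J \<inter> insert v (neighbours V E v) = {}}.
                \<Sum>T\<in>insert {v} (Pow {u \<in> neighbours V E v. \<forall>w\<in>J. \<not> E u w}). f (J \<union> T))"
proof -
  let ?Nv = "insert v (neighbours V E v)"
  define I' where "I' = {J \<in> independent_sets V E. J \<inter> ?Nv = {}}"
  define F where "F J = insert {v} (Pow {u \<in> neighbours V E v. \<forall>w\<in>J. \<not> E u w})" for J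
  have F: "F J = {T. T \<subseteq> ?Nv \<and> J \<union> T \<in> independent_sets V E}" if "J \<in> I'" for J
    using that independent_extensions_closed_neighbourhood[OF v] unfolding I'_def F_def by auto
  have "(\<Sum>I\<in>independent_sets V E. f I) = (\<Sum>(J, T)\<in>Sigma I' F. f (J \<union> T))"
  proof (rule sum.reindex_bij_witness[where j = "\<lambda>I. (I - ?Nv, I \<inter> ?Nv)" and i = "\<lambda>(J, T). J \<union> T"])
    fix I assume I: "I \<in> independent_sets V E"
    then have "I - ?Nv \<in> I'"
      unfolding I'_def using independent_sets_downward_closed by blast
    with I show "(I - ?Nv, I \<inter> ?Nv) \<in> Sigma I' F"
      by (simp add: F Un_Diff_Int)
  qed (use F in \<open>auto simp: I'_def Un_Diff_Int\<close>)
  also have "\<dots> = (\<Sum>J\<in>I'. \<Sum>T\<in>F J. f (J \<union> T))"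
    using finite_independent_sets finite_neighbours
    by (subst sum.Sigma) (auto simp: I'_def F_def)
  finally show ?thesis
    unfolding I'_def F_def .
qed

lemma occupancy_condition_closed_neighbourhood:
  assumes v: "v \<in> V" and l: "l > 0" and cond: "occupancy_condition d th l c"
    and J: "J \<in> independent_sets V E" "J \<inter> insert v (neighbours V E v) = {}"
  shows "0 \<le> (\<Sum>T\<in>insert {v} (Pow {u \<in> neighbours V E v. \<forall>w\<in>J. \<not> E u w}).
           l ^ card (J \<union> T) * (th * of_bool (v \<in> J \<union> T)
             + (1 - th) / d * card ((J \<union> T) \<inter> neighbours V E v) - c))"
proof -
  let ?N = "neighbours V E v"
  define g where "g I = l ^ card I * (th * of_bool (v \<in> I) + (1 - th) / d * card (I \<inter> ?N) - c)" for I
  define U where "U = {u \<in> ?N. \<forall>w\<in>J. \<not> E u w}"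
  have v_N: "v \<notin> ?N"
    using edge_irrefl unfolding neighbours_def by simp
  have "finite J"
    using J(1) independent_sets_subset_vertices finite_V by (blast intro: finite_subset)
  have "U \<subseteq> ?N" "finite U"
    unfolding U_def using finite_neighbours by auto
  have g_v: "g (J \<union> {v}) = l ^ card J * (l * (th - c))"
    using \<open>finite J\<close> J(2) v_N unfolding g_def by (simp add: Int_Un_distrib2 algebra_simps)
  have g_T: "g (J \<union> T) = l ^ card J * (l ^ card T * ((1 - th) / d * card T - c))"
    if "T \<in> Pow U" for T
  proof -
    have "T \<subseteq> ?N" "finite T"
      using that \<open>U \<subseteq> ?N\<close> \<open>finite U\<close> finite_subset by auto
    then have "card (J \<union> T) = card J + card T" "(J \<union> T) \<inter> ?N = T" "v \<notin> J \<union> T"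
      using \<open>finite J\<close> J(2) v_N by (auto intro: card_Un_disjoint)
    then show ?thesis
      unfolding g_def by (simp add: power_add algebra_simps)
  qed
  have "{v} \<notin> Pow U"
    using \<open>U \<subseteq> ?N\<close> v_N by auto
  then have "(\<Sum>T\<in>insert {v} (Pow U). g (J \<union> T)) = g (J \<union> {v}) + (\<Sum>T\<in>Pow U. g (J \<union> T))"
    using \<open>finite U\<close> by (simp add: sum.insert)
  also have "\<dots> = l ^ card J * (l * (th - c) + (\<Sum>T\<in>Pow U. l ^ card T * ((1 - th) / d * card T - c)))"
    unfolding g_v sum_distrib_left distrib_left by (simp only: sum.cong[OF refl g_T])
  also have "\<dots> \<ge> 0"
    using occupancy_condition_sum_Pow[OF \<open>finite U\<close> l cond] l by simp
  finally show ?thesis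
    unfolding U_def g_def .
qed

lemma occupancy_at_vertex:
  assumes v: "v \<in> V" and l: "l > 0" and cond: "occupancy_condition d th l c"
  shows "c * indep_poly l \<le> (\<Sum>I\<in>independent_sets V E.
           l ^ card I * (th * of_bool (v \<in> I) + (1 - th) / d * card (I \<inter> neighbours V E v)))"
proof -
  let ?N = "neighbours V E v"
  define g where "g I = l ^ card I * (th * of_bool (v \<in> I) + (1 - th) / d * card (I \<inter> ?N) - c)" for I
  have "0 \<le> (\<Sum>I\<in>independent_sets V E. g I)"
    unfolding sum_independent_sets_closed_neighbourhood[OF v] g_def
    by (rule sum_nonneg) (use occupancy_condition_closed_neighbourhood[OF v l cond] in blast)
  also have "(\<Sum>I\<in>independent_sets V E. g I) = (\<Sum>I\<in>independent_sets V E.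
      l ^ card I * (th * of_bool (v \<in> I) + (1 - th) / d * card (I \<inter> ?N))) - c * indep_poly l"
    unfolding indep_poly_def sum_distrib_left sum_subtractf[symmetric]
    by (rule sum.cong) (simp_all add: g_def algebra_simps)
  finally show ?thesis by simp
qed

lemma occupancy_bound:
  fixes d :: nat
  assumes deg: "\<And>v. v \<in> V \<Longrightarrow> degree V E v \<le> d" and d: "d > 0"
    and th: "0 \<le> th" "th \<le> 1" and l: "l > 0" and cond: "occupancy_condition d th l c"
  shows "c * card V * indep_poly l \<le> indep_poly_moment l"
proof -
  let ?I = "independent_sets V E" and ?N = "neighbours V E"
  have "c * card V * indep_poly l = (\<Sum>v\<in>V. c * indep_poly l)"
    by simp
  also have "\<dots> \<le> (\<Sum>v\<in>V. \<Sum>I\<in>?I. l ^ card I * (th * of_bool (v \<in> I) + (1 - th) / d * card (I \<inter> ?N v)))"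
    using occupancy_at_vertex[OF _ l cond] by (intro sum_mono)
  also have "\<dots> = (\<Sum>I\<in>?I. \<Sum>v\<in>V. l ^ card I * (th * of_bool (v \<in> I) + (1 - th) / d * card (I \<inter> ?N v)))"
    by (rule sum.swap)
  also have "\<dots> = (\<Sum>I\<in>?I. l ^ card I * (th * card I + (1 - th) / d * (\<Sum>v\<in>V. card (I \<inter> ?N v))))"
  proof (rule sum.cong)
    fix I assume "I \<in> ?I"
    then have "V \<inter> {v. v \<in> I} = I"
      using independent_sets_subset_vertices by blast
    then show "(\<Sum>v\<in>V. l ^ card I * (th * of_bool (v \<in> I) + (1 - th) / d * card (I \<inter> ?N v)))
               = l ^ card I * (th * card I + (1 - th) / d * (\<Sum>v\<in>V. card (I \<inter> ?N v)))"
      using finite_V by (simp add: sum.distrib flip: sum_distrib_left sum_divide_distrib)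
  qed simp
  also have "\<dots> \<le> (\<Sum>I\<in>?I. l ^ card I * (th * card I + (1 - th) / d * (d * card I)))"
  proof (rule sum_mono)
    fix I assume "I \<in> ?I"
    then have I: "I \<subseteq> V"
      by (rule independent_sets_subset_vertices)
    have "(\<Sum>v\<in>V. card (I \<inter> ?N v)) = (\<Sum>u\<in>I. degree V E u)"
      using I by (rule sum_card_Int_neighbours)
    also have "\<dots> \<le> d * card I"
      using I deg sum_bounded_above[of I "degree V E" d] by (auto simp: mult.commute)
    finally have "(\<Sum>v\<in>V. real (card (I \<inter> ?N v))) \<le> d * card I"
      by (metis of_nat_le_iff of_nat_mult of_nat_sum)
    then show "l ^ card I * (th * card I + (1 - th) / d * (\<Sum>v\<in>V. card (I \<inter> ?N v)))
               \<le> l ^ card I * (th * card I + (1 - th) / d * (d * card I))"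
      using th l by (intro mult_left_mono add_left_mono) simp_all
  qed
  also have "\<dots> = indep_poly_moment l"
    unfolding indep_poly_moment_def using d by (intro sum.cong) (simp_all add: field_simps)
  finally show ?thesis .
qed

text \<open>The fugacities \<open>M exp k / d\<close>, \<open>k \<le> K\<close>, stay below \<open>La\<close>, and at the \<open>k\<close>-th of them the
  occupancy condition holds with \<open>c = (1 - th) k / ((1 + La) (d + M))\<close>.\<close>
lemma card_independent_sets_ge_exp:
  fixes th M La :: real and d K :: nat
  assumes deg: "\<And>v. v \<in> V \<Longrightarrow> degree V E v \<le> d" and d: "d > 0"
    and th: "0 \<le> th" "th \<le> 1" and M: "M > 0" and La: "0 \<le> La" "La \<le> 1"
    and top: "M * exp K / d \<le> La" and K: "real K \<le> th * M"
  shows "exp (card V * ((1 - th) * K * (real K - 1) / (2 * (1 + La) * (d + M))))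
           \<le> card (independent_sets V E)"
proof -
  define lam where "lam k = M * exp k / d" for k :: nat
  define c where "c k = (1 - th) * k / ((1 + La) * (d + M))" for k :: nat
  have lam_pos: "lam k > 0" for k
    unfolding lam_def using M d by simp
  have lam_le: "lam k \<le> La" if "k \<le> K" for k
  proof -
    have "lam k \<le> lam K"
      unfolding lam_def using M d that by (intro divide_right_mono mult_left_mono) auto
    then show ?thesis
      using top unfolding lam_def by simp
  qed
  have "occupancy_condition d th (lam k) (c k)" if k: "k < K" for k
  proof (rule occupancy_conditionI[OF lam_pos th _ M])
    have c_nonneg: "c k \<ge> 0"
      unfolding c_def using th La M by simp
    then show "c k \<ge> 0" .
    show "real d > 0" using d by simp
    have "(1 - th) * k \<le> th * M * (1 + La)"
      using th k K M La mult_left_le_one_le[of k "1 - th"] mult_left_mono[of 1 "1 + La" "th * M"]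
      by simp
    then have "(1 - th) * k / (1 + La) \<le> th * M"
      using La by (simp add: pos_divide_le_eq)
    then have "(1 - th) * k / (1 + La) / (M + d) \<le> th * M / (M + d)"
      using M by (intro divide_right_mono) auto
    then show "c k \<le> th * M / (M + d)"
      unfolding c_def by (simp add: add.commute)
    have "c k * (1 + lam k) * (d + M) \<le> c k * (1 + La) * (d + M)"
      using lam_le[of k] k c_nonneg M by (intro mult_right_mono mult_left_mono) auto
    also have "\<dots> = (1 - th) * ln (lam k * d / M)"
      unfolding c_def lam_def using La M d by simp
    finally show "c k * (1 + lam k) * (d + M) \<le> (1 - th) * ln (lam k * d / M)" .
  qed
  then have "exp (card V * (\<Sum>k<K. c k)) \<le> indep_poly (lam K)"
    using occupancy_bound[OF deg d th lam_pos] lam_pos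
    by (intro indep_poly_iterate) (auto simp: lam_def exp_add mult.commute)
  also have "\<dots> \<le> card (independent_sets V E)"
    using indep_poly_le_card lam_pos[of K] lam_le[of K] La by (simp add: less_imp_le)
  also have "(\<Sum>k<K. c k) = (1 - th) * K * (real K - 1) / (2 * (1 + La) * (d + M))"
  proof -
    have gauss: "(\<Sum>k<K. real k) = real K * (real K - 1) / 2"
      by (induction K) (auto simp: field_simps)
    have "(\<Sum>k<K. c k) = (1 - th) / ((1 + La) * (d + M)) * (\<Sum>k<K. real k)"
      unfolding c_def sum_distrib_left by (rule sum.cong) simp_all
    then show ?thesis
      unfolding gauss by (simp add: field_simps)
  qed
  finally show ?thesis .
qed

lemma card_independent_sets_ge_exp_log:
  fixes e r :: real and d :: nat
  defines "L \<equiv> ln d + 2 * ln e - ln (ln d)"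
  assumes deg: "\<And>v. v \<in> V \<Longrightarrow> degree V E v \<le> d" and e: "0 < e" "e < 1"
    and d: "3 \<le> d" and L: "2 \<le> L"
    and r: "r \<le> (1 - e) * (L - 1) * (L - 2) / (2 * (1 + e) * (d + ln d / e))"
  shows "exp (r * card V) \<le> card (independent_sets V E)"
proof -
  define M where "M = ln d / e"
  define K where "K = nat \<lfloor>L\<rfloor>"
  have d_e: "exp 1 \<le> real d"
    using d exp_le by linarith
  then have "ln d \<ge> 1"
    using d ln_ge_iff[of d 1] by simp
  have K: "real K \<le> L" "L - 1 \<le> real K"
    unfolding K_def using L by linarith+
  have "exp (card V * ((1 - e) * K * (real K - 1) / (2 * (1 + e) * (d + M))))
          \<le> card (independent_sets V E)"
  proof (rule card_independent_sets_ge_exp[OF deg])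
    show "real K \<le> e * M"
      unfolding M_def using K log_cutoff(1)[OF e d_e] e unfolding L_def by simp
    have "M * exp K / d \<le> M * exp L / d"
      using K \<open>ln d \<ge> 1\<close> e unfolding M_def by (intro divide_right_mono mult_left_mono) auto
    then show "M * exp K / d \<le> e"
      using log_cutoff(2)[OF e d_e] unfolding M_def L_def by simp
  qed (use d e \<open>ln d \<ge> 1\<close> in \<open>auto simp: M_def\<close>)
  moreover have "r \<le> (1 - e) * K * (real K - 1) / (2 * (1 + e) * (d + M))"
  proof -
    have "(L - 1) * (L - 2) \<le> real K * (real K - 1)"
      using K L by (intro mult_mono) auto
    then have "(1 - e) * (L - 1) * (L - 2) \<le> (1 - e) * K * (real K - 1)"
      using e by (simp add: mult.assoc)
    moreover have "0 < 2 * (1 + e) * (d + M)"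
      unfolding M_def using e \<open>ln d \<ge> 1\<close> d by (intro mult_pos_pos add_pos_nonneg divide_nonneg_pos) auto
    ultimately show ?thesis
      using r unfolding M_def by (smt (verit) divide_right_mono)
  qed
  then have "r * card V \<le> card V * ((1 - e) * K * (real K - 1) / (2 * (1 + e) * (d + M)))"
    by (metis mult.commute mult_right_mono of_nat_0_le_iff)
  ultimately show ?thesis
    by (meson exp_le_cancel_iff order.trans)
qed

end

lemma eventually_ln_sq_div_le:
  fixes e :: real
  defines "L \<equiv> \<lambda>x. ln x + 2 * ln e - ln (ln x)"
  assumes e: "0 < e" "e < 1/2"
  shows "eventually (\<lambda>x. 3 \<le> x \<and> 2 \<le> L x \<and>
           (1/2 - e) * (ln x)\<^sup>2 / x \<le> (1 - e) * (L x - 1) * (L x - 2) / (2 * (1 + e) * (x + ln x / e)))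
         at_top"
proof -
  define R where "R x = (1 - e) * (L x - 1) * (L x - 2) * x / (2 * (1 + e) * (x + ln x / e) * (ln x)\<^sup>2)" for x
  have "(R \<longlongrightarrow> (1 - e) / (2 + 2 * e)) at_top"
    unfolding R_def L_def divide_inverse[of "1 - e"] using e by real_asymp
  moreover have "1/2 - e < (1 - e) / (2 + 2 * e)"
    using e by (simp add: field_simps)
  ultimately have "eventually (\<lambda>x. R x > 1/2 - e) at_top"
    by (rule order_tendstoD)
  moreover have "eventually (\<lambda>x. 2 \<le> L x) at_top"
  proof -
    have "filterlim L at_top at_top"
      unfolding L_def by real_asymp
    then show ?thesis by (simp add: filterlim_at_top)
  qed
  moreover have "eventually (\<lambda>x::real. 3 \<le> x) at_top"
    by (rule eventually_ge_at_top)
  ultimately show ?thesis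
  proof eventually_elim
    case (elim x)
    have ln_x: "ln x > 0" using elim by simp
    have "(1/2 - e) * (ln x)\<^sup>2 / x = (1/2 - e) * ((ln x)\<^sup>2 / x)"
      by simp
    also have "\<dots> \<le> R x * ((ln x)\<^sup>2 / x)"
      using elim by (intro mult_right_mono) auto
    also have "\<dots> = (1 - e) * (L x - 1) * (L x - 2) / (2 * (1 + e) * (x + ln x / e))"
    proof -
      have "a * x / (b * s) * (s / x) = a / b" if "s \<noteq> 0" "x \<noteq> 0" for a b s :: real
        using that by (cases "b = 0") (simp_all add: field_simps)
      then show ?thesis
        unfolding R_def using elim ln_x by simp
    qed
    finally show ?case using elim by simp
  qed
qed

lemma card_independent_sets_ge_exp_ln_sq:
  fixes e :: real
  assumes e: "e > 0"
  obtains D where "\<And>d V E. D \<le> real d \<Longrightarrow> simple_graph V E \<Longrightarrow> triangle_free V E \<Longrightarrow>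
    max_degree V E = d \<Longrightarrow>
    exp ((1/2 - e) * (ln (real d))\<^sup>2 / real d * real (card V)) \<le> card (independent_sets V E)"
proof (cases "e < 1/2")
  case True
  then obtain D where D: "\<And>x. x \<ge> D \<Longrightarrow> 3 \<le> x \<and> 2 \<le> ln x + 2 * ln e - ln (ln x) \<and>
      (1/2 - e) * (ln x)\<^sup>2 / x \<le> (1 - e) * (ln x + 2 * ln e - ln (ln x) - 1)
        * (ln x + 2 * ln e - ln (ln x) - 2) / (2 * (1 + e) * (x + ln x / e))"
    using eventually_ln_sq_div_le[OF e] unfolding eventually_at_top_linorder by blast
  show ?thesis
  proof (rule that)
    fix d :: nat and V E
    assume "D \<le> real d" "simple_graph V E" "triangle_free V E" "max_degree V E = d"
    then interpret triangle_free_graph V E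
      by unfold_locales
    show "exp ((1/2 - e) * (ln (real d))\<^sup>2 / real d * real (card V)) \<le> card (independent_sets V E)"
      using D[of d] \<open>D \<le> real d\<close> True e degree_le_max_degree \<open>max_degree V E = d\<close>
      by (intro card_independent_sets_ge_exp_log[where e = e]) auto
  qed
next
  case False
  show ?thesis
  proof (rule that)
    fix d :: nat and V E
    assume "simple_graph V E"
    then interpret sgraph V E
      by unfold_locales
    show "exp ((1/2 - e) * (ln (real d))\<^sup>2 / real d * real (card V)) \<le> card (independent_sets V E)"
      using False by (intro exp_nonpos_le_card_independent_sets mult_nonpos_nonneg divide_nonpos_nonneg) auto
  qed
qed

theorem theorem1p2:
  "\<forall>\<epsilon>::real. \<epsilon> > 0 \<longrightarrow> (\<exists>d0::nat. \<forall>d::nat. d \<ge> d0 \<longrightarrow>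
     (\<forall>(V::nat set) E. simple_graph V E \<and> V \<noteq> {} \<and> triangle_free V E \<and> max_degree V E = d \<longrightarrow>
        real (card (independent_sets V E))
          \<ge> exp ((1/2 - \<epsilon>) * (ln (real d))\<^sup>2 / real d * real (card V))))"
proof (intro allI impI)
  fix e :: real
  assume "e > 0"
  then obtain D where D: "\<And>d (V :: nat set) E. D \<le> real d \<Longrightarrow> simple_graph V E \<Longrightarrow>
      triangle_free V E \<Longrightarrow> max_degree V E = d \<Longrightarrow>
      exp ((1/2 - e) * (ln (real d))\<^sup>2 / real d * real (card V)) \<le> card (independent_sets V E)"
    using card_independent_sets_ge_exp_ln_sq by blast
  have "D \<le> real d" if "nat \<lceil>D\<rceil> \<le> d" for d
    using that by linarith
  then show "\<exists>d0::nat. \<forall>d\<ge>d0. \<forall>(V::nat set) E. simple_graph V E \<and> V \<noteq> {} \<and> triangle_free V E \<and>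
      max_degree V E = d \<longrightarrow>
      real (card (independent_sets V E)) \<ge> exp ((1/2 - e) * (ln (real d))\<^sup>2 / real d * real (card V))"
    using D by blast
qed

end
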